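(* Let $\bar p$ be any maximizer of $p\mapsto\min_{k\in\mathcal K}\mathrm{SIR}_k(p)/\gamma_k$ over $\mathcal P$ (equivalently over $\{p\ge0:\max_{n\in\mathcal N}g_n(p)\le1\}$). Then (i) $\max_{n\in\mathcal N}g_n(\bar p)=1$; (ii) if $V$ is irreducible, then $\bar p$ is unique and there is $\beta>0$ with $\gamma_k/\mathrm{SIR}_k(\bar p)=\beta$ for all $k\in\mathcal K$.
   Context: Network model: $K\ge 2$ links, $\mathcal K=\{1,\dots,K\}$. Power constraint set $\mathcal P=\{p\in\mathbb R_+^K: Cp\le\hat p\}$, where $C\in\{0,1\}^{N\times K}$ has at least one entry equal to $1$ in each column and $\hat p=(P_1,\dots,P_N)\in\mathbb R_{++}^N$; $\mathcal N=\{1,\dots,N\}$; $c_n\in\{0,1\}^K$ is the $n$-th row of $C$ (as a column vector) and $g_n(p)=c_n^Tp/P_n$. Gain matrix $V\in\mathbb R_+^{K\times K}$ with zero diagonal, noise vector $z\in\mathbb R_{++}^K$, $\mathrm{SIR}_k(p)=p_k/((Vp)_k+z_k)$. SIR targets $\gamma_1,\dots,\gamma_K>0$. *)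

theory Defs
  imports "HOL-Analysis.Analysis"
begin

definition SIR :: "real^'k^'k \<Rightarrow> real^'k \<Rightarrow> real^'k \<Rightarrow> 'k \<Rightarrow> real" where
  "SIR V z p k = p$k / ((V *v p)$k + z$k)"

definition powset :: "real^'k^'n \<Rightarrow> real^'n \<Rightarrow> (real^'k) set" where
  "powset C phat = {p. (\<forall>k. 0 \<le> p$k) \<and> (\<forall>n. (C *v p)$n \<le> phat$n)}"

definition gfun :: "real^'k^'n \<Rightarrow> real^'n \<Rightarrow> real^'k \<Rightarrow> 'n \<Rightarrow> real" where
  "gfun C phat p n = (C *v p)$n / phat$n"

definition util :: "real^'k^'k \<Rightarrow> real^'k \<Rightarrow> real^'k \<Rightarrow> real^'k \<Rightarrow> real" where
  "util V z gamma p = Min (range (\<lambda>k::'k::finite. SIR V z p k / gamma$k))"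

text \<open>Irreducibility of a square nonnegative matrix (standard combinatorial definition):
  there is no nonempty proper index subset S with V_ij = 0 for all i in S, j not in S
  (i.e. V cannot be permuted to block-triangular form).\<close>
definition irreducible_mat :: "real^'k^'k \<Rightarrow> bool" where
  "irreducible_mat V \<longleftrightarrow>
     \<not> (\<exists>S. S \<noteq> {} \<and> S \<noteq> UNIV \<and> (\<forall>i\<in>S. \<forall>j. j \<notin> S \<longrightarrow> V$i$j = 0))"

end

theory Submission
  imports Defs
begin

text \<open>
  For a utility level u, the required-power map
    T_u(p)_k = u * gamma_k * ((V p)_k + z_k)
  gives the power link k needs to reach SIR_k = u * gamma_k against the interference
  produced by p. For p >= 0 one has T_u(p) <= p componentwise iff every normalized
  SIR_k(p)/gamma_k is at least u, i.e. iff util(p) >= u, and T_u(p) = p iff all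
  normalized SIRs equal u. Points with T_u(p) <= p are called supersolutions.
  The proof rests on three facts:
  (a) scaling a strictly positive power vector by t > 1 strictly increases util;
  (b) below every point p >= 0 with T_u(p) <= p lies a fixed point of T_u
      (minimize the total power over the compact set of such points below p; the
      zero diagonal of V lets one lower a single slack coordinate);
  (c) if V is irreducible, a point p with T_u(p) <= p that dominates a fixed point q
      either equals q or dominates it strictly in every coordinate.
  Part (i): if max_n g_n(pbar) < 1 then scaling pbar up stays feasible, contradicting
  maximality by (a). Part (ii): a maximizer p dominates a fixed point by (b); by (c) and
  (a) it coincides with it, hence all normalized SIRs are balanced. Two maximizers both
  dominate a common fixed point below their componentwise minimum, so they are equal.
\<close>

lemma mult_vec_mono:
  fixes V :: "real^'j^'i"
  assumes "\<And>i j. 0 \<le> V$i$j" and "\<And>j. x$j \<le> y$j"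
  shows "(V *v x)$i \<le> (V *v y)$i"
  using assms by (auto simp: matrix_vector_mult_def intro!: sum_mono mult_left_mono)

lemma mult_vec_nonneg:
  fixes V :: "real^'j^'i"
  assumes "\<And>i j. 0 \<le> V$i$j" and "\<And>j. 0 \<le> x$j"
  shows "0 \<le> (V *v x)$i"
  using assms by (auto simp: matrix_vector_mult_def intro!: sum_nonneg)

lemma powset_downward_closed:
  assumes C_nonneg: "\<And>n k. 0 \<le> C$n$k" and p: "p \<in> powset C phat"
    and q_nonneg: "\<And>k. 0 \<le> q$k" and q_le: "\<And>k. q$k \<le> p$k"
  shows "q \<in> powset C phat"
proof -
  have "(C *v q)$n \<le> phat$n" for n
  proof -
    have "(C *v q)$n \<le> (C *v p)$n" by (rule mult_vec_mono[OF C_nonneg q_le])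
    also have "\<dots> \<le> phat$n" using p by (simp add: powset_def)
    finally show ?thesis .
  qed
  then show ?thesis using q_nonneg by (simp add: powset_def)
qed

text \<open>Dividing a feasible vector by the largest normalized load M > 0 stays feasible;
  this is the scaling that makes the binding budget tight.\<close>

lemma powset_scale_to_budget:
  assumes p: "p \<in> powset C phat" and phat_pos: "\<And>n. 0 < phat$n"
    and M_pos: "0 < Max (range (gfun C phat p))"
  shows "(1 / Max (range (gfun C phat p))) *\<^sub>R p \<in> powset C phat"
proof -
  let ?M = "Max (range (gfun C phat p))"
  have "(C *v p)$n \<le> ?M * phat$n" for n
  proof -
    have "gfun C phat p n \<le> ?M" by (rule Max_ge) auto
    then show ?thesis using phat_pos[of n] unfolding gfun_def by (simp only: pos_divide_le_eq)
  qed
  then have "(C *v p)$n / ?M \<le> phat$n" for n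
    using M_pos by (simp add: pos_divide_le_eq mult.commute)
  then show ?thesis
    using p M_pos by (simp add: powset_def matrix_vector_mult_scaleR)
qed

text \<open>The uniform vector with entries min_n P_n / K is feasible when C is 0/1.\<close>

lemma powset_has_positive_point:
  fixes C :: "real^'k::finite^'n::finite"
  assumes C01: "\<And>n k. C$n$k = 0 \<or> C$n$k = 1" and phat_pos: "\<And>n. 0 < phat$n"
  obtains p where "p \<in> powset C phat" and "\<And>k. 0 < p$k"
proof -
  define c where "c = Min (range (\<lambda>n. phat$n)) / real CARD('k)"
  have c_pos: "0 < c" using phat_pos by (simp add: c_def)
  have "(C *v (\<chi> k. c))$n \<le> phat$n" for n
  proof -
    have "(C *v (\<chi> k. c))$n = (\<Sum>k\<in>UNIV. C$n$k * c)" by (simp add: matrix_vector_mult_def)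
    also have "\<dots> \<le> (\<Sum>k\<in>(UNIV::'k set). c)"
      by (rule sum_mono) (use C01 c_pos in \<open>metis eq_iff mult_zero_left mult_1 less_imp_le\<close>)
    also have "\<dots> = Min (range (\<lambda>n. phat$n))" by (simp add: c_def)
    also have "\<dots> \<le> phat$n" by (rule Min_le) auto
    finally show ?thesis .
  qed
  then have "(\<chi> k. c) \<in> powset C phat" using c_pos by (simp add: powset_def)
  with c_pos show ?thesis by (intro that) auto
qed

text \<open>A strictly positive vector has a strictly positive load on some node, because
  every link is constrained by at least one node.\<close>

lemma gfun_Max_pos:
  fixes C :: "real^'k::finite^'n::finite"
  assumes C01: "\<And>n k. C$n$k = 0 \<or> C$n$k = 1" and Ccol: "\<And>k. \<exists>n. C$n$k = 1"
    and phat_pos: "\<And>n. 0 < phat$n" and p_pos: "\<And>k. 0 < p$k"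
  shows "0 < Max (range (gfun C phat p))"
proof -
  obtain k :: 'k where True by simp
  obtain n where n: "C$n$k = 1" using Ccol by blast
  have C_nonneg: "0 \<le> C$n$j" for j using C01[of n j] by auto
  have "p$k = C$n$k * p$k" using n by simp
  also have "\<dots> \<le> (\<Sum>j\<in>UNIV. C$n$j * p$j)"
    by (rule member_le_sum) (use C_nonneg p_pos in \<open>auto intro: mult_nonneg_nonneg less_imp_le\<close>)
  finally have "0 < (C *v p)$n" using p_pos[of k] by (simp add: matrix_vector_mult_def)
  then have "0 < gfun C phat p n" using phat_pos[of n] by (simp add: gfun_def)
  also have "gfun C phat p n \<le> Max (range (gfun C phat p))" by (rule Max_ge) auto
  finally show ?thesis .
qed

lemma scale_below_strict:
  fixes p q :: "real^'k::finite"
  assumes q_pos: "\<And>k. 0 < q$k" and q_less: "\<And>k. q$k < p$k"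
  obtains t where "1 < t" and "\<And>k. (t *\<^sub>R q)$k \<le> p$k"
proof
  let ?t = "Min (range (\<lambda>k. p$k / q$k))"
  show "1 < ?t" using q_pos q_less by simp
  show "(?t *\<^sub>R q)$k \<le> p$k" for k
  proof -
    have "?t \<le> p$k / q$k" by (rule Min_le) auto
    then show ?thesis using q_pos[of k] by (simp add: le_divide_eq)
  qed
qed

locale sir_network =
  fixes V :: "real^'k::finite^'k" and z gamma :: "real^'k"
  assumes V_nonneg: "\<And>i j. 0 \<le> V$i$j"
    and z_pos: "\<And>k. 0 < z$k"
    and gamma_pos: "\<And>k. 0 < gamma$k"
begin

definition req_power :: "real \<Rightarrow> real^'k \<Rightarrow> real^'k" where
  "req_power u p = (\<chi> k. u * gamma$k * ((V *v p)$k + z$k))"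

definition optimal :: "real^'k^'n::finite \<Rightarrow> real^'n \<Rightarrow> real^'k \<Rightarrow> bool" where
  "optimal C phat p \<longleftrightarrow>
     p \<in> powset C phat \<and> (\<forall>q\<in>powset C phat. util V z gamma q \<le> util V z gamma p)"

lemma denom_pos:
  assumes "\<And>j. 0 \<le> p$j"
  shows "0 < (V *v p)$k + z$k"
  using mult_vec_nonneg[OF V_nonneg assms, of k] z_pos[of k] by linarith

lemma util_le: "util V z gamma p \<le> SIR V z p k / gamma$k"
  unfolding util_def by (rule Min_le) auto

lemma util_attained: obtains k where "util V z gamma p = SIR V z p k / gamma$k"
proof -
  have "util V z gamma p \<in> range (\<lambda>k. SIR V z p k / gamma$k)"
    unfolding util_def by (rule Min_in) auto
  then show ?thesis using that by auto
qed

lemma util_ge_iff: "u \<le> util V z gamma p \<longleftrightarrow> (\<forall>k. u \<le> SIR V z p k / gamma$k)"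
  unfolding util_def by simp

lemma util_pos:
  assumes "\<And>k. 0 < p$k"
  shows "0 < util V z gamma p"
proof -
  obtain k where k: "util V z gamma p = SIR V z p k / gamma$k" by (rule util_attained)
  have "0 < SIR V z p k"
    using denom_pos[of p k] assms by (simp add: SIR_def less_imp_le)
  then show ?thesis using k gamma_pos[of k] by simp
qed

text \<open>Fact (a): scaling a strictly positive vector up by t > 1 raises every SIR, since
  the noise does not scale; hence it raises the utility strictly.\<close>

lemma util_scale_strict:
  assumes p_pos: "\<And>k. 0 < p$k" and t: "1 < t"
  shows "util V z gamma p < util V z gamma (t *\<^sub>R p)"
proof -
  obtain k where k: "util V z gamma (t *\<^sub>R p) = SIR V z (t *\<^sub>R p) k / gamma$k"
    by (rule util_attained)
  have I: "0 \<le> (V *v p)$k" using mult_vec_nonneg[OF V_nonneg] p_pos less_imp_le by blast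
  have "p$k * (t * (V *v p)$k + z$k) < (t * p$k) * ((V *v p)$k + z$k)"
    using p_pos[of k] z_pos[of k] t by (simp add: algebra_simps)
  then have "p$k / ((V *v p)$k + z$k) < (t * p$k) / (t * (V *v p)$k + z$k)"
    using I z_pos[of k] t by (simp add: divide_simps) (smt (verit) mult_nonneg_nonneg)
  then have "SIR V z p k / gamma$k < SIR V z (t *\<^sub>R p) k / gamma$k"
    unfolding SIR_def matrix_vector_mult_scaleR using gamma_pos[of k]
    by (intro divide_strict_right_mono) simp_all
  with util_le[of p k] k show ?thesis by simp
qed

lemma req_power_gap:
  assumes "\<And>j. 0 \<le> p$j"
  shows "req_power u p $ k - p$k
       = gamma$k * ((V *v p)$k + z$k) * (u - SIR V z p k / gamma$k)"
proof -
  have "(V *v p)$k + z$k \<noteq> 0" "gamma$k \<noteq> 0"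
    using denom_pos[OF assms, of k] gamma_pos[of k] by auto
  then have "gamma$k * ((V *v p)$k + z$k) * (SIR V z p k / gamma$k) = p$k"
    by (simp add: SIR_def)
  then show ?thesis by (simp add: req_power_def right_diff_distrib mult_ac)
qed

lemma req_power_le_iff:
  assumes "\<And>j. 0 \<le> p$j"
  shows "req_power u p $ k \<le> p$k \<longleftrightarrow> u \<le> SIR V z p k / gamma$k"
proof -
  have "0 < gamma$k * ((V *v p)$k + z$k)" using denom_pos[OF assms] gamma_pos by simp
  then show ?thesis using req_power_gap[OF assms, of u k]
    by (smt (verit) mult_pos_pos mult_nonneg_nonpos)
qed

lemma req_power_fixed_iff:
  assumes "\<And>j. 0 \<le> p$j"
  shows "req_power u p $ k = p$k \<longleftrightarrow> SIR V z p k / gamma$k = u"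
proof -
  have "0 < gamma$k * ((V *v p)$k + z$k)" using denom_pos[OF assms] gamma_pos by simp
  then show ?thesis using req_power_gap[OF assms, of u k] by auto
qed

lemma supersolution_iff_util:
  assumes "\<And>j. 0 \<le> p$j"
  shows "(\<forall>k. req_power u p $ k \<le> p$k) \<longleftrightarrow> u \<le> util V z gamma p"
  using req_power_le_iff[OF assms] util_ge_iff by simp

lemma supersolution_at_util:
  assumes "\<And>j. 0 \<le> p$j"
  shows "req_power (util V z gamma p) p $ k \<le> p$k"
  using supersolution_iff_util[OF assms, of "util V z gamma p"] by simp

lemma fixed_point_balanced:
  assumes "\<And>j. 0 \<le> q$j" and "req_power u q = q"
  shows "SIR V z q k / gamma$k = u"
  using req_power_fixed_iff[OF assms(1), of u k] assms(2) by simp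

lemma fixed_point_pos:
  assumes "req_power u q = q" and "\<And>j. 0 \<le> q$j" and "0 < u"
  shows "0 < q$k"
proof -
  have "q$k = u * gamma$k * ((V *v q)$k + z$k)"
    using arg_cong[OF assms(1), of "\<lambda>x. x$k"] by (simp add: req_power_def)
  then show ?thesis using denom_pos[OF assms(2), of k] gamma_pos[of k] assms(3) by simp
qed

lemma req_power_mono:
  assumes "0 \<le> u" and "\<And>j. x$j \<le> y$j"
  shows "req_power u x $ k \<le> req_power u y $ k"
  using mult_vec_mono[OF V_nonneg assms(2), of k] gamma_pos[of k] assms(1)
  by (simp add: req_power_def mult_left_mono less_imp_le)

lemma req_power_continuous: "continuous_on S (\<lambda>q. req_power u q $ k)"
  unfolding req_power_def matrix_vector_mult_def by (simp; intro continuous_intros)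

subsection \<open>Existence of fixed points\<close>

definition supersol_below :: "real \<Rightarrow> real^'k \<Rightarrow> (real^'k) set" where
  "supersol_below u m =
     {q. (\<forall>k. 0 \<le> q$k) \<and> (\<forall>k. q$k \<le> m$k) \<and> (\<forall>k. req_power u q $ k \<le> q$k)}"

lemma supersol_below_compact: "compact (supersol_below u m)"
proof -
  have "closed (supersol_below u m)"
    unfolding supersol_below_def Collect_conj_eq
    by (intro closed_Int closed_Collect_all closed_Collect_le continuous_intros
          req_power_continuous)
  moreover have "bounded (supersol_below u m)"
    unfolding bounded_iff
    by (rule exI[of _ "norm m"], intro ballI norm_le_componentwise_cart)
       (auto simp: supersol_below_def intro: order_trans[OF _ abs_ge_self])
  ultimately show ?thesis by (simp add: compact_eq_bounded_closed)
qed

text \<open>Lowering a slack coordinate of a supersolution to its required power keeps it a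
  supersolution: the other coordinates only see less interference, and coordinate k
  does not interfere with itself because V has zero diagonal.\<close>

lemma supersol_lower_slack:
  fixes k :: 'k
  assumes V_diag: "\<And>k. V$k$k = 0" and u: "0 \<le> u"
    and q: "q \<in> supersol_below u m"
  defines "q' \<equiv> (\<chi> j. if j = k then req_power u q $ k else q$j)"
  shows "q' \<in> supersol_below u m" and "\<And>j. q'$j \<le> q$j"
proof -
  have q_nonneg: "\<And>j. 0 \<le> q$j" and q_le_m: "\<And>j. q$j \<le> m$j"
    and q_super: "\<And>j. req_power u q $ j \<le> q$j"
    using q by (auto simp: supersol_below_def)
  show q'_le: "q'$j \<le> q$j" for j using q_super by (simp add: q'_def)
  have same_k: "req_power u q' $ k = req_power u q $ k"
  proof -
    have "(V *v q')$k = (V *v q)$k"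
      unfolding matrix_vector_mult_def using V_diag by (auto simp: q'_def intro!: sum.cong)
    then show ?thesis by (simp add: req_power_def)
  qed
  have req_nonneg: "0 \<le> req_power u q $ k"
    using denom_pos[OF q_nonneg, of k] gamma_pos[of k] u by (simp add: req_power_def)
  have "req_power u q' $ j \<le> q'$j" for j
  proof (cases "j = k")
    case False
    have "req_power u q' $ j \<le> req_power u q $ j" by (rule req_power_mono[OF u q'_le])
    with q_super[of j] False show ?thesis by (simp add: q'_def)
  next
    case True
    have "q'$k = req_power u q $ k" by (simp add: q'_def)
    with same_k True show ?thesis by simp
  qed
  moreover have "0 \<le> q'$j" "q'$j \<le> m$j" for j
    using q_nonneg req_nonneg q'_le[of j] q_le_m[of j] by (auto simp: q'_def)
  ultimately show "q' \<in> supersol_below u m" by (simp add: supersol_below_def)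
qed

text \<open>Fact (b): a supersolution of least total power is a fixed point.\<close>

lemma fixed_point_below:
  assumes V_diag: "\<And>k. V$k$k = 0" and u: "0 \<le> u"
    and m_nonneg: "\<And>k. 0 \<le> m$k" and m_super: "\<And>k. req_power u m $ k \<le> m$k"
  obtains q where "\<And>k. 0 \<le> q$k" "\<And>k. q$k \<le> m$k" "req_power u q = q"
proof -
  have "m \<in> supersol_below u m" using m_nonneg m_super by (simp add: supersol_below_def)
  moreover have "continuous_on (supersol_below u m) (\<lambda>q. \<Sum>k\<in>UNIV. q$k)"
    by (intro continuous_intros)
  ultimately obtain q where q: "q \<in> supersol_below u m"
    and q_min: "\<forall>y\<in>supersol_below u m. (\<Sum>k\<in>UNIV. q$k) \<le> (\<Sum>k\<in>UNIV. y$k)"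
    using continuous_attains_inf[OF supersol_below_compact] by blast
  have "req_power u q = q"
  proof (rule ccontr)
    assume "req_power u q \<noteq> q"
    then obtain k where "req_power u q $ k \<noteq> q$k" by (auto simp: vec_eq_iff)
    with q have slack: "req_power u q $ k < q$k" by (simp add: supersol_below_def order_less_le)
    define q' where "q' = (\<chi> j. if j = k then req_power u q $ k else q$j)"
    have "q' \<in> supersol_below u m" and q'_le: "\<And>j. q'$j \<le> q$j"
      using supersol_lower_slack[OF V_diag u q, of k] by (simp_all add: q'_def)
    moreover have "(\<Sum>j\<in>UNIV. q'$j) < (\<Sum>j\<in>UNIV. q$j)"
      by (rule sum_strict_mono_ex1) (use q'_le slack in \<open>auto simp: q'_def\<close>)
    ultimately show False using q_min by fastforce
  qed
  with q show ?thesis by (intro that) (auto simp: supersol_below_def)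
qed

text \<open>Fact (c): if p is a supersolution dominating a fixed point q, the links where
  p = q receive no interference from links where p > q (otherwise their SIR would drop
  below the target). Irreducibility rules out such a block unless it is trivial.\<close>

lemma irreducible_dominated_fixed_point:
  assumes irr: "irreducible_mat V" and u_pos: "0 < u"
    and p_super: "\<And>k. req_power u p $ k \<le> p$k"
    and q_fixed: "req_power u q = q" and q_le: "\<And>k. q$k \<le> p$k"
  shows "p = q \<or> (\<forall>k. q$k < p$k)"
proof -
  define S where "S = {k. p$k = q$k}"
  have block: "\<forall>i\<in>S. \<forall>j. j \<notin> S \<longrightarrow> V$i$j = 0"
  proof (intro ballI allI impI)
    fix i j assume iS: "i \<in> S" and jS: "j \<notin> S"
    have "u * gamma$i * ((V *v p)$i + z$i) \<le> u * gamma$i * ((V *v q)$i + z$i)"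
      using p_super[of i] arg_cong[OF q_fixed, of "\<lambda>x. x$i"] iS
      by (simp add: S_def req_power_def)
    then have le: "(V *v p)$i \<le> (V *v q)$i"
      using u_pos gamma_pos[of i] by (simp add: mult_le_cancel_left_pos)
    have "V$i$j * (p$j - q$j) \<le> (\<Sum>l\<in>UNIV. V$i$l * (p$l - q$l))"
      by (rule member_le_sum) (use V_nonneg q_le in auto)
    also have "\<dots> = (V *v p)$i - (V *v q)$i"
      by (simp add: matrix_vector_mult_def sum_subtractf[symmetric] algebra_simps)
    finally have "V$i$j * (p$j - q$j) \<le> 0" using le by linarith
    moreover have "0 < p$j - q$j" using jS q_le[of j] by (auto simp: S_def)
    ultimately show "V$i$j = 0" using V_nonneg[of i j] by (smt (verit) mult_pos_pos)
  qed
  have "S = {} \<or> S = UNIV"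
    using irr block unfolding irreducible_mat_def by blast
  then show ?thesis
  proof
    assume "S = UNIV"
    then show ?thesis by (auto simp: S_def vec_eq_iff)
  next
    assume "S = {}"
    then have neq: "p$k \<noteq> q$k" for k by (auto simp: S_def)
    show ?thesis
    proof (intro disjI2 allI)
      show "q$k < p$k" for k using q_le[of k] neq[of k] by linarith
    qed
  qed
qed

lemma optimal_util_pos:
  fixes C :: "real^'k^'n::finite"
  assumes C01: "\<And>n k. C$n$k = 0 \<or> C$n$k = 1" and phat_pos: "\<And>n. 0 < phat$n"
    and opt: "optimal C phat p"
  shows "0 < util V z gamma p"
proof -
  obtain p0 where "p0 \<in> powset C phat" and "\<And>k. 0 < p0$k"
    using powset_has_positive_point[OF C01 phat_pos] by blast
  then show ?thesis using opt util_pos[of p0] by (auto simp: optimal_def)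
qed

lemma util_pos_imp_pos:
  assumes "\<And>j. 0 \<le> p$j" and "0 < util V z gamma p"
  shows "0 < p$k"
proof -
  have "0 < SIR V z p k / gamma$k" using assms(2) util_le[of p k] by linarith
  then have "0 < SIR V z p k" using gamma_pos[of k] by (simp add: zero_less_divide_iff)
  then show ?thesis using denom_pos[OF assms(1), of k] by (simp add: SIR_def zero_less_divide_iff)
qed

lemma optimal_budget_tight:
  fixes C :: "real^'k^'n::finite"
  assumes C01: "\<And>n k. C$n$k = 0 \<or> C$n$k = 1" and Ccol: "\<And>k. \<exists>n. C$n$k = 1"
    and phat_pos: "\<And>n. 0 < phat$n" and opt: "optimal C phat p"
  shows "Max (range (gfun C phat p)) = 1"
proof -
  let ?M = "Max (range (gfun C phat p))"
  have p_in: "p \<in> powset C phat" using opt by (simp add: optimal_def)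
  have p_pos: "\<And>k. 0 < p$k"
    using util_pos_imp_pos optimal_util_pos[OF C01 phat_pos opt] p_in by (simp add: powset_def)
  have M_pos: "0 < ?M" by (rule gfun_Max_pos[OF C01 Ccol phat_pos p_pos])
  have "?M \<le> 1" using p_in phat_pos by (simp add: powset_def gfun_def)
  moreover have "\<not> ?M < 1"
  proof
    assume "?M < 1"
    then have "1 < 1 / ?M" using M_pos by simp
    then have "util V z gamma p < util V z gamma ((1 / ?M) *\<^sub>R p)"
      by (rule util_scale_strict[OF p_pos])
    moreover have "(1 / ?M) *\<^sub>R p \<in> powset C phat"
      by (rule powset_scale_to_budget[OF p_in phat_pos M_pos])
    ultimately show False using opt by (auto simp: optimal_def)
  qed
  ultimately show ?thesis by linarith
qed

text \<open>Under irreducibility an optimal vector equals every fixed point of T_u below it,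
  u being the optimal utility: otherwise it strictly dominates the fixed point, which
  could then be scaled up feasibly beyond the optimum.\<close>

lemma optimal_eq_fixed_point_below:
  fixes C :: "real^'k^'n::finite"
  assumes C_nonneg: "\<And>n k. 0 \<le> C$n$k" and irr: "irreducible_mat V"
    and opt: "optimal C phat p" and u_pos: "0 < util V z gamma p"
    and q_nonneg: "\<And>k. 0 \<le> q$k" and q_le: "\<And>k. q$k \<le> p$k"
    and q_fixed: "req_power (util V z gamma p) q = q"
  shows "p = q"
proof (rule ccontr)
  let ?u = "util V z gamma p"
  assume "p \<noteq> q"
  have p_in: "p \<in> powset C phat" using opt by (simp add: optimal_def)
  have "\<And>k. req_power ?u p $ k \<le> p$k"
    using supersolution_at_util p_in by (simp add: powset_def)
  with \<open>p \<noteq> q\<close> have q_less: "\<And>k. q$k < p$k"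
    using irreducible_dominated_fixed_point[OF irr u_pos _ q_fixed q_le] by blast
  have q_pos: "\<And>k. 0 < q$k" by (rule fixed_point_pos[OF q_fixed q_nonneg u_pos])
  obtain t where t: "1 < t" and tq_le: "\<And>k. (t *\<^sub>R q)$k \<le> p$k"
    using scale_below_strict[OF q_pos q_less] by blast
  have "t *\<^sub>R q \<in> powset C phat"
    by (rule powset_downward_closed[OF C_nonneg p_in _ tq_le])
       (use t q_nonneg in \<open>simp\<close>)
  then have "util V z gamma (t *\<^sub>R q) \<le> ?u" using opt by (simp add: optimal_def)
  moreover have "util V z gamma q < util V z gamma (t *\<^sub>R q)"
    by (rule util_scale_strict[OF q_pos t])
  moreover have "util V z gamma q = ?u"
    using fixed_point_balanced[OF q_nonneg q_fixed] util_attained[of q] by metis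
  ultimately show False by simp
qed

lemma optimal_balanced:
  fixes C :: "real^'k^'n::finite"
  assumes V_diag: "\<And>k. V$k$k = 0" and C_nonneg: "\<And>n k. 0 \<le> C$n$k"
    and irr: "irreducible_mat V" and opt: "optimal C phat p"
    and u_pos: "0 < util V z gamma p"
  shows "SIR V z p k / gamma$k = util V z gamma p"
proof -
  let ?u = "util V z gamma p"
  have p_nonneg: "\<And>k. 0 \<le> p$k" using opt by (simp add: optimal_def powset_def)
  have p_super: "\<And>k. req_power ?u p $ k \<le> p$k" by (rule supersolution_at_util[OF p_nonneg])
  obtain q where q_nonneg: "\<And>k. 0 \<le> q$k" and q_le: "\<And>k. q$k \<le> p$k"
    and q_fixed: "req_power ?u q = q"
    using fixed_point_below[OF V_diag less_imp_le[OF u_pos] p_nonneg p_super] by blast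
  have "p = q" by (rule optimal_eq_fixed_point_below[OF C_nonneg irr opt u_pos q_nonneg q_le q_fixed])
  then show ?thesis using fixed_point_balanced[OF q_nonneg q_fixed] by simp
qed

lemma optimal_unique:
  fixes C :: "real^'k^'n::finite"
  assumes V_diag: "\<And>k. V$k$k = 0" and C_nonneg: "\<And>n k. 0 \<le> C$n$k"
    and irr: "irreducible_mat V" and opt_p: "optimal C phat p" and opt_q: "optimal C phat q"
    and u_pos: "0 < util V z gamma p"
  shows "q = p"
proof -
  let ?u = "util V z gamma p"
  have same_util: "util V z gamma q = ?u"
    using opt_p opt_q by (auto simp: optimal_def intro: order_antisym)
  have p_nonneg: "\<And>k. 0 \<le> p$k" and q_nonneg: "\<And>k. 0 \<le> q$k"
    using opt_p opt_q by (auto simp: optimal_def powset_def)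
  have p_super: "\<And>k. req_power ?u p $ k \<le> p$k" by (rule supersolution_at_util[OF p_nonneg])
  have q_super: "\<And>k. req_power ?u q $ k \<le> q$k"
    using supersolution_at_util[OF q_nonneg] same_util by simp
  define m where "m = (\<chi> k. min (p$k) (q$k))"
  have m_le: "\<And>k. m$k \<le> p$k" "\<And>k. m$k \<le> q$k" by (simp_all add: m_def)
  have m_nonneg: "\<And>k. 0 \<le> m$k" using p_nonneg q_nonneg by (simp add: m_def)
  have m_super: "req_power ?u m $ k \<le> m$k" for k
  proof -
    have "req_power ?u m $ k \<le> p$k"
      using req_power_mono[OF less_imp_le[OF u_pos] m_le(1), of k] p_super[of k] by linarith
    moreover have "req_power ?u m $ k \<le> q$k"
      using req_power_mono[OF less_imp_le[OF u_pos] m_le(2), of k] q_super[of k] by linarith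
    ultimately show ?thesis by (simp add: m_def)
  qed
  obtain s where s: "\<And>k. 0 \<le> s$k" "\<And>k. s$k \<le> m$k" "req_power ?u s = s"
    using fixed_point_below[OF V_diag less_imp_le[OF u_pos] m_nonneg m_super] by blast
  have s_le_p: "\<And>k. s$k \<le> p$k" and s_le_q: "\<And>k. s$k \<le> q$k"
    using s(2) m_le order_trans by blast+
  have "p = s" by (rule optimal_eq_fixed_point_below[OF C_nonneg irr opt_p u_pos s(1) s_le_p s(3)])
  moreover have "q = s"
    by (rule optimal_eq_fixed_point_below[OF C_nonneg irr opt_q _ s(1) s_le_q])
       (use s(3) same_util u_pos in simp_all)
  ultimately show ?thesis by simp
qed

end

theorem lemma2:
  fixes C :: "real^'k::finite^'n::finite"
    and phat :: "real^'n"
    and V :: "real^'k^'k"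
    and z gamma pbar :: "real^'k"
  assumes K2: "CARD('k) \<ge> 2"
    and C01: "\<forall>n k. C$n$k = 0 \<or> C$n$k = 1"
    and Ccol: "\<forall>k. \<exists>n. C$n$k = 1"
    and phat_pos: "\<forall>n. phat$n > 0"
    and V_nonneg: "\<forall>i j. V$i$j \<ge> 0"
    and V_diag: "\<forall>k. V$k$k = 0"
    and z_pos: "\<forall>k. z$k > 0"
    and gamma_pos: "\<forall>k. gamma$k > 0"
    and pbar_in: "pbar \<in> powset C phat"
    and pbar_max: "\<forall>p\<in>powset C phat. util V z gamma p \<le> util V z gamma pbar"
  shows "Max (range (gfun C phat pbar)) = 1 \<and>
         (irreducible_mat V \<longrightarrow>
           (\<forall>q\<in>powset C phat. (\<forall>p\<in>powset C phat. util V z gamma p \<le> util V z gamma q)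
                \<longrightarrow> q = pbar)
         \<and> (\<exists>\<beta>>0. \<forall>k. gamma$k / SIR V z pbar k = \<beta>))"
proof -
  interpret sir_network V z gamma
    using V_nonneg z_pos gamma_pos by unfold_locales auto
  let ?u = "util V z gamma pbar"
  have C01': "\<And>n k. C$n$k = 0 \<or> C$n$k = 1" and Ccol': "\<And>k. \<exists>n. C$n$k = 1"
    and phat_pos': "\<And>n. 0 < phat$n" and V_diag': "\<And>k. V$k$k = 0"
    using C01 Ccol phat_pos V_diag by blast+
  have C_nonneg: "\<And>n k. 0 \<le> C$n$k" using C01' by (metis order_refl zero_le_one)
  have opt: "optimal C phat pbar" using pbar_in pbar_max by (simp add: optimal_def)
  have u_pos: "0 < ?u" by (rule optimal_util_pos[OF C01' phat_pos' opt])
  have tight: "Max (range (gfun C phat pbar)) = 1"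
    by (rule optimal_budget_tight[OF C01' Ccol' phat_pos' opt])
  have balanced: "\<exists>\<beta>>0. \<forall>k. gamma$k / SIR V z pbar k = \<beta>" if irr: "irreducible_mat V"
  proof (intro exI conjI allI)
    show "0 < 1 / ?u" using u_pos by simp
    fix k
    have "SIR V z pbar k / gamma$k = ?u"
      by (rule optimal_balanced[OF V_diag' C_nonneg irr opt u_pos])
    then show "gamma$k / SIR V z pbar k = 1 / ?u" by (metis inverse_divide inverse_eq_divide)
  qed
  have unique: "q = pbar"
    if irr: "irreducible_mat V" and "q \<in> powset C phat"
      and "\<forall>p\<in>powset C phat. util V z gamma p \<le> util V z gamma q" for q
    by (rule optimal_unique[OF V_diag' C_nonneg irr opt _ u_pos]) (simp add: optimal_def that)
  show ?thesis using tight balanced unique by blast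
qed

end
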